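(* Let $a,k,\tilde t,b,c\in\mathbb{C}^*$ be generic parameters satisfying $kbc=qa\tilde t$. Then for all integers $0\le m\le N$, $$\sum_{n=m}^{N}M_{Nn}(a,k)\,D_n(a;b,c)\,M_{nm}(\tilde t,a)=D_N\big(k;q\tilde t/c,q\tilde t/b\big)\,M_{Nm}(\tilde t,k)\,D_m(\tilde t;b,c).$$ Equivalently, for lower-triangular matrices $M(a,k)=(M_{nm}(a,k))_{n,m\ge0}$ and diagonal matrices $D(a;b,c)=\operatorname{diag}(D_n(a;b,c))_{n\ge0}$, $$M(a,k)\,D(a;b,c)\,M(\tilde t,a)=D\big(k;q\tilde t/c,q\tilde t/b\big)\,M(\tilde t,k)\,D(\tilde t;b,c).$$
   Context: Fix $p,q\in\mathbb{C}$ with $0<|p|,|q|<1$. Notation: $(z;p)_\infty=\prod_{j\ge0}(1-zp^j)$; $\theta(z;p)=(z;p)_\infty(p/z;p)_\infty$. The elliptic Pochhammer symbol is $\theta(z)_n=\prod_{j=0}^{n-1}\theta(zq^j;p)$ for $n\ge0$, and $\theta(z_1,\dots,z_r)_n=\prod_i\theta(z_i)_n$. For $0\le m\le N$ define $$M_{Nm}(a,k)=\frac{\theta(k)_{N+m}\,\theta(k/a)_{N-m}}{\theta(qa)_{N+m}\,\theta(q)_{N-m}}\,\frac{\theta(aq^{2m};p)}{\theta(a;p)}\,a^{N-m},$$ and set $M_{Nm}(a,k)=0$ for $m>N$. Also define $$D_n(a;b,c)=\frac{\theta(b,c)_n}{\theta(aq/b,aq/c)_n}\Big(\frac{aq}{bc}\Big)^n.$$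 *)

theory Defs
  imports "HOL-Analysis.Analysis"
begin

definition qpoch_inf :: "complex \<Rightarrow> complex \<Rightarrow> complex" where
  "qpoch_inf z p = (\<Prod>j. (1 - z * p ^ j))"

definition etheta :: "complex \<Rightarrow> complex \<Rightarrow> complex" where
  "etheta z p = qpoch_inf z p * qpoch_inf (p / z) p"

definition epoch :: "complex \<Rightarrow> complex \<Rightarrow> complex \<Rightarrow> nat \<Rightarrow> complex" where
  "epoch p q z n = (\<Prod>j<n. etheta (z * q ^ j) p)"

definition Mmat :: "complex \<Rightarrow> complex \<Rightarrow> nat \<Rightarrow> nat \<Rightarrow> complex \<Rightarrow> complex \<Rightarrow> complex" where
  "Mmat p q N m a k =
     (if m \<le> N then
        (epoch p q k (N + m) * epoch p q (k / a) (N - m))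
        / (epoch p q (q * a) (N + m) * epoch p q q (N - m))
        * (etheta (a * q ^ (2 * m)) p / etheta a p) * a ^ (N - m)
      else 0)"

definition Dmat :: "complex \<Rightarrow> complex \<Rightarrow> nat \<Rightarrow> complex \<Rightarrow> complex \<Rightarrow> complex \<Rightarrow> complex" where
  "Dmat p q n a b c =
     (epoch p q b n * epoch p q c n) / (epoch p q (a * q / b) n * epoch p q (a * q / c) n)
     * (a * q / (b * c)) ^ n"

end

theory Submission
  imports Defs "HOL-Complex_Analysis.Complex_Analysis"
begin

text \<open>
  The identity is a terminating Frenkel--Turaev summation in disguise. After the substitution
  \<open>n = m + j\<close> and removal of a common factor, the summands of \<open>M(a,k) D(a;b,c) M(t,a)\<close> are the
  terms of the balanced elliptic sum with parameters \<open>a q\<^sup>2\<^sup>m, b q\<^sup>m, c q\<^sup>m, a/t\<close>, and its closed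
  form is the right-hand side. The Frenkel--Turaev sum is proved by induction on its length: both
  sides obey the same two-term recurrence, which reduces to Weierstrass' three-term addition
  formula for \<open>\<theta>\<close>. That formula is proved analytically: for fixed \<open>y, u, v\<close> both sides are
  holomorphic in \<open>x\<close> on \<open>\<complex> - {0}\<close> and quasi-periodic with the same factor under \<open>x \<mapsto> p x\<close>;
  divided by \<open>\<theta>(x u) \<theta>(x / u)\<close> they become \<open>p\<close>-periodic with removable singularities,
  hence constant by Liouville's theorem.
\<close>

section \<open>The infinite product and multiplicatively periodic functions\<close>

lemma convergent_prod_qpoch:
  fixes p z :: complex
  assumes "norm p < 1"
  shows "convergent_prod (\<lambda>j. 1 - z * p ^ j)"
proof (rule abs_convergent_prod_imp_convergent_prod, rule summable_imp_abs_convergent_prod)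
  show "summable (\<lambda>j. norm (1 - z * p ^ j - 1))"
    using assms by (simp add: norm_mult norm_power summable_mult summable_geometric)
qed

lemma qpoch_inf_eq_0_iff:
  fixes p z :: complex
  assumes "norm p < 1"
  shows "qpoch_inf z p = 0 \<longleftrightarrow> (\<exists>j. z * p ^ j = 1)"
proof -
  have "(\<lambda>j. 1 - z * p ^ j) has_prod qpoch_inf z p"
    unfolding qpoch_inf_def using convergent_prod_has_prod convergent_prod_qpoch[OF assms] by blast
  from has_prod_eq_0_iff[OF this] show ?thesis
    by (metis (mono_tags, lifting) eq_iff_diff_eq_0 rangeE rangeI)
qed

lemma qpoch_inf_unfold:
  fixes p z :: complex
  assumes "norm p < 1"
  shows "qpoch_inf z p = (1 - z) * qpoch_inf (z * p) p"
proof (cases "z = 1")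
  case True
  then show ?thesis using qpoch_inf_eq_0_iff[OF assms, of z] by (metis mult_zero_left power_0 mult_1_right diff_self)
next
  case False
  have "qpoch_inf z p / (1 - z) = (\<Prod>j. 1 - z * p ^ Suc j)"
    using prodinf_split_head[OF convergent_prod_qpoch[OF assms, of z]] False
    unfolding qpoch_inf_def by simp
  also have "\<dots> = qpoch_inf (z * p) p"
    unfolding qpoch_inf_def by (simp add: mult_ac)
  finally show ?thesis using False by (simp add: field_simps)
qed

lemma uniform_limit_qpoch_inf:
  fixes p :: complex
  assumes "norm p < 1"
  shows "uniform_limit (cball 0 R) (\<lambda>N z. \<Prod>j<N. 1 - z * p ^ j) (\<lambda>z. qpoch_inf z p) sequentially"
proof -
  let ?P = "\<lambda>N z. \<Prod>j<N. 1 - z * p ^ j"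
  have "uniformly_convergent_on (cball 0 R) ?P"
  proof (rule uniformly_convergent_on_prod')
    show "uniformly_convergent_on (cball 0 R) (\<lambda>N z. \<Sum>j<N. norm (1 - z * p ^ j - 1))"
    proof (rule Weierstrass_m_test'_ev)
      show "\<forall>\<^sub>F j in sequentially. \<forall>z\<in>cball 0 R. norm (norm (1 - z * p ^ j - 1)) \<le> R * norm p ^ j"
        by (intro always_eventually allI ballI) (simp add: norm_mult norm_power mult_right_mono)
      show "summable (\<lambda>j. R * norm p ^ j)"
        using assms by (intro summable_mult summable_geometric) simp
    qed
  qed (auto intro!: continuous_intros)
  then obtain g where g: "uniform_limit (cball 0 R) ?P g sequentially"
    by (auto simp: uniformly_convergent_on_def)
  moreover have "g z = qpoch_inf z p" if "z \<in> cball 0 R" for z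
  proof (rule tendsto_unique[OF sequentially_bot])
    show "(\<lambda>N. ?P N z) \<longlonglongrightarrow> g z"
      using g that by (rule tendsto_uniform_limitI)
    show "(\<lambda>N. ?P N z) \<longlonglongrightarrow> qpoch_inf z p"
      using convergent_prod_LIMSEQ[OF convergent_prod_qpoch[OF assms, of z]] LIMSEQ_lessThan_iff_atMost
      unfolding qpoch_inf_def by blast
  qed
  ultimately show ?thesis
    using uniform_limit_cong'[of "cball 0 R" ?P ?P g "\<lambda>z. qpoch_inf z p"] by blast
qed

lemma holomorphic_on_qpoch_inf:
  fixes p :: complex
  assumes "norm p < 1"
  shows "(\<lambda>z. qpoch_inf z p) holomorphic_on A"
proof (rule holomorphic_on_subset[of _ UNIV])
  show "(\<lambda>z. qpoch_inf z p) holomorphic_on UNIV"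
  proof (rule holomorphic_uniform_sequence[where f = "\<lambda>N z. \<Prod>j<N. 1 - z * p ^ j"])
    fix z :: complex
    have "uniform_limit (cball z 1) (\<lambda>N z. \<Prod>j<N. 1 - z * p ^ j) (\<lambda>z. qpoch_inf z p) sequentially"
      by (rule uniform_limit_on_subset[OF uniform_limit_qpoch_inf[OF assms, of "norm z + 1"]])
         (simp add: cball_subset_cball_iff)
    then show "\<exists>d>0. cball z d \<subseteq> UNIV \<and>
        uniform_limit (cball z d) (\<lambda>N z. \<Prod>j<N. 1 - z * p ^ j) (\<lambda>z. qpoch_inf z p) sequentially"
      by (intro exI[of _ 1]) auto
  qed (auto intro!: holomorphic_intros)
qed auto

lemma mult_periodic_power_int:
  fixes g :: "complex \<Rightarrow> 'a"
  assumes per: "\<And>x. x \<noteq> 0 \<Longrightarrow> g (p * x) = g x" and p: "p \<noteq> 0" and x: "x \<noteq> 0"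
  shows "g (x * p powi k) = g x"
proof -
  have nat: "g (y * p ^ n) = g y" if "y \<noteq> 0" for y n
  proof (induction n)
    case (Suc n)
    have "g (y * p ^ Suc n) = g (p * (y * p ^ n))" by (simp add: mult_ac)
    also have "\<dots> = g (y * p ^ n)" using per p that by simp
    finally show ?case using Suc by simp
  qed simp
  show ?thesis
  proof (cases k rule: int_cases2)
    case (nonneg n)
    then show ?thesis using nat[OF x] by simp
  next
    case (nonpos n)
    have "g x = g (x / p ^ n * p ^ n)" using p by simp
    also have "\<dots> = g (x / p ^ n)" by (rule nat) (use p x in simp)
    finally show ?thesis using nonpos by (simp add: power_int_minus divide_inverse)
  qed
qed

lemma mult_periodic_holomorphic_imp_constant:
  fixes g :: "complex \<Rightarrow> complex"
  assumes p: "0 < norm p" "norm p < 1"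
    and hol: "g holomorphic_on - {0}" and per: "\<And>x. x \<noteq> 0 \<Longrightarrow> g (p * x) = g x"
  obtains C where "\<And>x. x \<noteq> 0 \<Longrightarrow> g x = C"
proof -
  define K where "K = cball 0 1 - ball (0::complex) (norm p)"
  have "K \<subseteq> - {0}" unfolding K_def using p by auto
  then have "compact (g ` K)"
    unfolding K_def using holomorphic_on_imp_continuous_on[OF hol]
    by (intro compact_continuous_image compact_diff) (auto intro: continuous_on_subset)
  then obtain B where B: "\<And>z. z \<in> K \<Longrightarrow> norm (g z) \<le> B"
    by (meson bounded_iff compact_imp_bounded imageI)
  \<comment> \<open>every orbit \<open>x p\<^sup>\<int>\<close> meets the annulus \<open>K\<close>, so \<open>g\<close> is bounded\<close>
  have bounded: "norm (g x) \<le> B" if x: "x \<noteq> 0" for x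
  proof -
    define \<sigma> where "\<sigma> = - ln (norm p)"
    have \<sigma>: "\<sigma> > 0" unfolding \<sigma>_def using p by simp
    define k where "k = \<lceil>ln (norm x) / \<sigma>\<rceil>"
    have "ln (norm x) / \<sigma> \<le> k" "k < ln (norm x) / \<sigma> + 1"
      unfolding k_def by linarith+
    then have k: "ln (norm x) - k * \<sigma> \<le> 0" "- \<sigma> < ln (norm x) - k * \<sigma>"
      using \<sigma> by (simp_all add: field_simps)
    have "norm (x * p powi k) = exp (ln (norm x) - k * \<sigma>)"
      using x p by (simp add: norm_mult norm_power_int \<sigma>_def exp_add powr_real_of_int'[symmetric] powr_def)
    also have "\<dots> \<in> {exp (- \<sigma>)..1}"
      using k by auto
    also have "exp (- \<sigma>) = norm p"
      using p by (simp add: \<sigma>_def)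
    finally have "x * p powi k \<in> K"
      unfolding K_def by (simp add: dist_norm)
    with B have "norm (g (x * p powi k)) \<le> B" .
    moreover have "g (x * p powi k) = g x"
      by (rule mult_periodic_power_int[where g = g, OF per]) (use p x in auto)
    ultimately show ?thesis by simp
  qed
  have "(g \<circ> exp) holomorphic_on UNIV"
    by (rule holomorphic_on_compose_gen[OF holomorphic_on_exp hol]) auto
  moreover have "bounded (range (g \<circ> exp))"
    using bounded unfolding bounded_iff by (intro exI[of _ B]) auto
  ultimately obtain C where "\<And>w. g (exp w) = C"
    using Liouville_theorem by (fastforce simp: constant_on_def)
  then show ?thesis
    using that by (metis exp_Ln)
qed

lemma numerator_eq_0_if_quotient_tendsto:
  fixes F D :: "complex \<Rightarrow> complex"
  assumes lim: "((\<lambda>z. F z / D z) \<longlongrightarrow> L) (at x)" and cont: "isCont F x" "isCont D x"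
    and D: "D x = 0" "\<forall>\<^sub>F z in at x. D z \<noteq> 0"
  shows "F x = 0"
proof -
  have "((\<lambda>z. F z / D z * D z) \<longlongrightarrow> L * D x) (at x)"
    using lim isContD[OF cont(2)] by (rule tendsto_mult)
  moreover have "\<forall>\<^sub>F z in at x. F z / D z * D z = F z"
    using D(2) by eventually_elim simp
  ultimately have "(F \<longlongrightarrow> L * D x) (at x)"
    by (rule Lim_transform_eventually)
  then show ?thesis
    using isContD[OF cont(1)] tendsto_unique[OF at_neq_bot] D(1) by fastforce
qed

lemma holomorphic_quotient_extension:
  fixes F D :: "complex \<Rightarrow> complex"
  assumes S: "open S" "connected S" and F: "F holomorphic_on S" and D: "D holomorphic_on S"
    and y: "y \<in> S" "D y \<noteq> 0"
    and lim: "\<And>x. x \<in> S \<Longrightarrow> D x = 0 \<Longrightarrow> \<exists>L. ((\<lambda>z. F z / D z) \<longlongrightarrow> L) (at x)"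
  obtains G where "G holomorphic_on S" "\<And>x. x \<in> S \<Longrightarrow> F x = G x * D x"
proof -
  define G where "G = remove_sings (\<lambda>z. F z / D z)"
  have F_an: "F analytic_on {x}" and D_an: "D analytic_on {x}" if "x \<in> S" for x
    using holomorphic_on_imp_analytic_at[OF F S(1) that] holomorphic_on_imp_analytic_at[OF D S(1) that] .
  have punctured: "\<exists>r>0. ball x r \<subseteq> S \<and> (\<forall>z\<in>ball x r - {x}. D z \<noteq> 0)" if x: "x \<in> S" "D x = 0" for x
  proof -
    obtain r where "0 < r" "ball x r \<subseteq> S" "\<And>z. z \<in> ball x r - {x} \<Longrightarrow> D z \<noteq> 0"
      using isolated_zeros[OF D S x y] by blast
    then show ?thesis by blast
  qed
  have G_an: "G analytic_on {x}" if x: "x \<in> S" for x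
  proof (cases "D x = 0")
    case True
    then obtain r where r: "r > 0" "ball x r \<subseteq> S" "\<forall>z\<in>ball x r - {x}. D z \<noteq> 0"
      using punctured x by blast
    have "(\<lambda>z. F z / D z) holomorphic_on ball x r - {x}"
      using r by (intro holomorphic_intros holomorphic_on_subset[OF F] holomorphic_on_subset[OF D]) auto
    then have "isolated_singularity_at (\<lambda>z. F z / D z) x"
      by (rule isolated_singularity_at_holomorphic) (use r in auto)
    with lim[OF x True] show ?thesis
      unfolding G_def using remove_sings_analytic_at by blast
  next
    case False
    then have "(\<lambda>z. F z / D z) analytic_on {x}"
      by (intro analytic_on_divide F_an[OF x] D_an[OF x]) auto
    then show ?thesis
      unfolding G_def by (rule remove_sings_analytic_on)
  qed
  then have "G analytic_on S"
    using analytic_on_analytic_at by blast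
  then have "G holomorphic_on S"
    by (rule analytic_imp_holomorphic)
  moreover have "F x = G x * D x" if x: "x \<in> S" for x
  proof (cases "D x = 0")
    case True
    then obtain r where r: "r > 0" "ball x r \<subseteq> S" "\<forall>z\<in>ball x r - {x}. D z \<noteq> 0"
      using punctured x by blast
    have "\<forall>\<^sub>F z in at x. z \<in> ball x r - {x}"
      using r(1) by (intro eventually_at_in_open) auto
    then have "\<forall>\<^sub>F z in at x. D z \<noteq> 0"
      by eventually_elim (use r in auto)
    then have "F x = 0"
      using lim[OF x True] analytic_at_imp_isCont[OF F_an[OF x]] analytic_at_imp_isCont[OF D_an[OF x]] True
      by (metis numerator_eq_0_if_quotient_tendsto)
    then show ?thesis using True by simp
  next
    case False
    then have "(\<lambda>z. F z / D z) analytic_on {x}"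
      by (intro analytic_on_divide F_an[OF x] D_an[OF x]) auto
    then show ?thesis
      unfolding G_def using False by simp
  qed
  ultimately show ?thesis
    using that by blast
qed

lemma mult_periodic_quotient_imp_proportional:
  fixes F D e :: "complex \<Rightarrow> complex"
  assumes p: "0 < norm p" "norm p < 1"
    and F: "F holomorphic_on - {0}" and D: "D holomorphic_on - {0}" and y: "y \<noteq> 0" "D y \<noteq> 0"
    and F_per: "\<And>x. x \<noteq> 0 \<Longrightarrow> F (p * x) = e x * F x"
    and D_per: "\<And>x. x \<noteq> 0 \<Longrightarrow> D (p * x) = e x * D x"
    and e: "\<And>x. x \<noteq> 0 \<Longrightarrow> e x \<noteq> 0"
    and lim: "\<And>x. x \<noteq> 0 \<Longrightarrow> D x = 0 \<Longrightarrow> \<exists>k::int. \<exists>L. ((\<lambda>z. F z / D z) \<longlongrightarrow> L) (at (x * p powi k))"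
  obtains C where "\<And>x. x \<noteq> 0 \<Longrightarrow> F x = C * D x"
proof -
  have p0: "p \<noteq> 0" using p by auto
  have S: "open (- {0::complex})" "connected (- {0::complex})"
    by (auto intro!: path_connected_imp_connected path_connected_punctured_universe)
  define Q where "Q = (\<lambda>z. F z / D z)"
  have Q_per: "Q (p * x) = Q x" if "x \<noteq> 0" for x
    unfolding Q_def F_per[OF that] D_per[OF that] using e[OF that] by simp
  have Q_lim: "\<exists>L. (Q \<longlongrightarrow> L) (at x)" if x: "x \<noteq> 0" "D x = 0" for x
  proof -
    obtain k L where L: "(Q \<longlongrightarrow> L) (at (x * p powi k))"
      using lim[OF x] unfolding Q_def by blast
    have "filterlim (\<lambda>z. z * p powi k) (at (x * p powi k)) (at x)"
      using p0 by (intro filterlim_atI tendsto_intros) (auto simp: eventually_at_filter)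
    then have "((\<lambda>z. Q (z * p powi k)) \<longlongrightarrow> L) (at x)"
      by (rule filterlim_compose[OF L])
    moreover have "\<forall>\<^sub>F z in at x. Q (z * p powi k) = Q z"
      using eventually_neq_at_within[of 0 x] by eventually_elim (rule mult_periodic_power_int[where g = Q, OF Q_per p0])
    ultimately have "(Q \<longlongrightarrow> L) (at x)"
      by (rule Lim_transform_eventually)
    then show ?thesis ..
  qed
  have y': "y \<in> - {0}" using y by simp
  obtain G where G: "G holomorphic_on - {0}" "\<And>x. x \<in> - {0} \<Longrightarrow> F x = G x * D x"
    by (rule holomorphic_quotient_extension[OF S F D y' y(2) Q_lim[unfolded Q_def]]) auto
  \<comment> \<open>\<open>G\<close> inherits the periodicity of \<open>F / D\<close> off the zeros of \<open>D\<close>, hence everywhere\<close>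
  have G_per: "G (p * x) = G x" if x: "x \<noteq> 0" for x
  proof (rule analytic_continuation_open[where s = "{z. z \<noteq> 0 \<and> D z \<noteq> 0}" and s' = "- {0}"
        and f = "\<lambda>z. G (p * z)" and g = G])
    have "open (- {0} \<inter> D -` (- {0}))"
      by (rule continuous_open_preimage[OF holomorphic_on_imp_continuous_on[OF D]]) auto
    moreover have "- {0} \<inter> D -` (- {0}) = {z. z \<noteq> 0 \<and> D z \<noteq> 0}"
      by auto
    ultimately show "open {z. z \<noteq> 0 \<and> D z \<noteq> 0}"
      by simp
    show "(\<lambda>z. G (p * z)) holomorphic_on - {0}"
      by (rule holomorphic_on_compose_gen[where f = "\<lambda>z. p * z", OF _ G(1), unfolded o_def])
         (use p0 in \<open>auto intro!: holomorphic_intros\<close>)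
    fix z assume z: "z \<in> {z. z \<noteq> 0 \<and> D z \<noteq> 0}"
    then have z0: "z \<noteq> 0" and Dpz: "D (p * z) \<noteq> 0"
      using e D_per by auto
    have "G (p * z) * D (p * z) = F (p * z)"
      using G(2)[of "p * z"] p0 z0 by simp
    also have "\<dots> = G z * D (p * z)"
      using F_per[OF z0] D_per[OF z0] G(2)[of z] z0 by simp
    finally show "G (p * z) = G z"
      using Dpz by simp
  qed (use x y G(1) S in auto)
  obtain C where C: "\<And>x. x \<noteq> 0 \<Longrightarrow> G x = C"
    using mult_periodic_holomorphic_imp_constant[OF p G(1) G_per] by blast
  show ?thesis
    by (rule that[of C]) (use G(2) C in simp)
qed

lemma quotient_tendsto_at_simple_zero:
  fixes F D H :: "complex \<Rightarrow> complex"
  assumes F: "F holomorphic_on S" "open S" "a \<in> S" "F a = 0"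
    and D: "\<And>z. D z = (z - a) * H z" and H: "isCont H a" "H a \<noteq> 0"
  shows "\<exists>L. ((\<lambda>z. F z / D z) \<longlongrightarrow> L) (at a)"
proof
  define F1 where "F1 z = (if z = a then deriv F a else (F z - F a) / (z - a))" for z
  have "F1 holomorphic_on S"
    unfolding F1_def using F by (intro pole_lemma) (auto simp: interior_open)
  then have "isCont F1 a"
    using F(2,3) holomorphic_on_imp_continuous_on continuous_on_eq_continuous_at by blast
  then have "((\<lambda>z. F1 z / H z) \<longlongrightarrow> F1 a / H a) (at a)"
    using H by (intro tendsto_intros) (auto simp: isCont_def)
  moreover have "\<forall>\<^sub>F z in at a. F1 z / H z = F z / D z"
    using eventually_neq_at_within[of a a] by eventually_elim (simp add: F1_def D F(4))
  ultimately show "((\<lambda>z. F z / D z) \<longlongrightarrow> F1 a / H a) (at a)"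
    by (rule Lim_transform_eventually)
qed

section \<open>The theta function and its addition formula\<close>

definition etheta_cofactor :: "complex \<Rightarrow> complex \<Rightarrow> complex" where
  "etheta_cofactor p z = qpoch_inf (z * p) p * qpoch_inf (p / z) p"

definition etheta_cross :: "complex \<Rightarrow> complex \<Rightarrow> complex \<Rightarrow> complex" where
  "etheta_cross p x y = etheta (x * y) p * etheta (x / y) p"

context
  fixes p :: complex
  assumes p: "0 < norm p" "norm p < 1"
begin

lemma etheta_eq_cofactor: "etheta z p = (1 - z) * etheta_cofactor p z"
  unfolding etheta_def etheta_cofactor_def using qpoch_inf_unfold[OF p(2), of z] by simp

lemma etheta_1: "etheta 1 p = 0"
  by (simp add: etheta_eq_cofactor)

lemma etheta_cofactor_1: "etheta_cofactor p 1 \<noteq> 0"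
proof -
  have "norm (p * p ^ j) < 1" for j
    using power_Suc_less_one[OF p] by (simp add: norm_mult norm_power)
  then have "p * p ^ j \<noteq> 1" for j
    by (metis norm_one order_less_irrefl)
  then show ?thesis
    unfolding etheta_cofactor_def using qpoch_inf_eq_0_iff[OF p(2)] by auto
qed

lemma etheta_mult_p: "z \<noteq> 0 \<Longrightarrow> etheta (p * z) p = - (etheta z p / z)"
proof -
  assume z: "z \<noteq> 0"
  have "etheta (p * z) p = qpoch_inf (1 / z) p * qpoch_inf (p * z) p"
    unfolding etheta_def using p z by simp
  also have "\<dots> = (1 - 1 / z) * etheta_cofactor p z"
    unfolding etheta_cofactor_def using qpoch_inf_unfold[OF p(2), of "1 / z"] by (simp add: mult_ac)
  also have "\<dots> = - (etheta z p / z)"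
    unfolding etheta_eq_cofactor using z by (simp add: field_simps)
  finally show ?thesis .
qed

lemma etheta_inverse: "z \<noteq> 0 \<Longrightarrow> etheta (1 / z) p = - (etheta z p / z)"
  using etheta_mult_p[of z] p unfolding etheta_def by (simp add: mult.commute)

lemma etheta_eq_0_imp_power_int:
  assumes "etheta z p = 0" "z \<noteq> 0"
  shows "\<exists>k::int. z = p powi k"
proof -
  have "qpoch_inf z p = 0 \<or> qpoch_inf (p / z) p = 0"
    using assms(1) unfolding etheta_def by simp
  then obtain j where "z * p ^ j = 1 \<or> p / z * p ^ j = 1"
    using qpoch_inf_eq_0_iff[OF p(2)] by blast
  then show ?thesis
  proof
    assume "z * p ^ j = 1"
    then have "z = p powi (- int j)"
      using p by (simp add: power_int_minus field_simps)
    then show ?thesis ..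
  next
    assume "p / z * p ^ j = 1"
    then have "z = p ^ Suc j"
      using assms(2) by (simp add: field_simps)
    then have "z = p powi int (Suc j)"
      by (simp only: power_int_of_nat)
    then show ?thesis ..
  qed
qed

lemma countable_etheta_zeros: "countable {z. etheta z p = 0}"
proof (rule countable_subset)
  show "{z. etheta z p = 0} \<subseteq> insert 0 (range (power_int p))"
    using etheta_eq_0_imp_power_int by blast
qed simp

lemma holomorphic_on_etheta: "(\<lambda>z. etheta z p) holomorphic_on - {0}"
  unfolding etheta_def
  by (intro holomorphic_intros holomorphic_on_compose_gen[OF _ holomorphic_on_qpoch_inf[OF p(2)], unfolded o_def])
     auto

lemma holomorphic_on_etheta_cofactor: "etheta_cofactor p holomorphic_on - {0}"
  unfolding etheta_cofactor_def
  by (intro holomorphic_intros holomorphic_on_compose_gen[OF _ holomorphic_on_qpoch_inf[OF p(2)], unfolded o_def])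
     auto

lemma holomorphic_on_etheta_compose:
  "f holomorphic_on S \<Longrightarrow> (\<And>x. x \<in> S \<Longrightarrow> f x \<noteq> 0) \<Longrightarrow> (\<lambda>x. etheta (f x) p) holomorphic_on S"
  by (rule holomorphic_on_compose_gen[OF _ holomorphic_on_etheta, unfolded o_def]) auto

lemma isCont_etheta:
  assumes "isCont f z" "f z \<noteq> 0"
  shows "isCont (\<lambda>x. etheta (f x) p) z"
proof -
  have "isCont (\<lambda>w. etheta w p) (f z)"
    using holomorphic_on_imp_continuous_on[OF holomorphic_on_etheta] assms(2)
    by (simp add: continuous_on_eq_continuous_at open_Compl)
  then show ?thesis
    using continuous_at_compose[OF assms(1)] by (simp add: o_def)
qed

lemma isCont_etheta_cofactor:
  assumes "isCont f z" "f z \<noteq> 0"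
  shows "isCont (\<lambda>x. etheta_cofactor p (f x)) z"
proof -
  have "isCont (etheta_cofactor p) (f z)"
    using holomorphic_on_imp_continuous_on[OF holomorphic_on_etheta_cofactor] assms(2)
    by (simp add: continuous_on_eq_continuous_at open_Compl)
  then show ?thesis
    using continuous_at_compose[OF assms(1)] by (simp add: o_def)
qed


lemma etheta_cross_mult_p:
  assumes "x \<noteq> 0" "y \<noteq> 0"
  shows "etheta_cross p (p * x) y = etheta_cross p x y / x\<^sup>2"
proof -
  have e: "etheta (p * x * y) p = - (etheta (x * y) p / (x * y))" "etheta (p * x / y) p = - (etheta (x / y) p / (x / y))"
    using etheta_mult_p[of "x * y"] etheta_mult_p[of "x / y"] assms by (simp_all add: mult.assoc)
  show ?thesis
    unfolding etheta_cross_def e using assms by (simp add: field_simps power2_eq_square)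
qed

lemma etheta_cross_inverse:
  assumes "x \<noteq> 0" "y \<noteq> 0"
  shows "etheta_cross p (1 / x) y = etheta_cross p x y / x\<^sup>2"
proof -
  have e: "etheta (1 / x * y) p = - (etheta (x / y) p / (x / y))" "etheta (1 / x / y) p = - (etheta (x * y) p / (x * y))"
    using etheta_inverse[of "x / y"] etheta_inverse[of "x * y"] assms by simp_all
  show ?thesis
    unfolding etheta_cross_def e using assms by (simp add: field_simps power2_eq_square)
qed

lemma etheta_cross_swap:
  assumes "x \<noteq> 0" "y \<noteq> 0"
  shows "etheta_cross p y x = - (y / x) * etheta_cross p x y"
  using etheta_inverse[of "x / y"] assms unfolding etheta_cross_def by (simp add: mult.commute)

lemma etheta_cross_self: "x \<noteq> 0 \<Longrightarrow> etheta_cross p x x = 0"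
  unfolding etheta_cross_def by (simp add: etheta_1)

lemma holomorphic_on_etheta_cross: "y \<noteq> 0 \<Longrightarrow> (\<lambda>x. etheta_cross p x y) holomorphic_on - {0}"
  unfolding etheta_cross_def by (auto intro!: holomorphic_intros holomorphic_on_etheta_compose)

lemma etheta_cross_eq_0_imp:
  assumes "etheta_cross p x y = 0" "x \<noteq> 0" "y \<noteq> 0"
  obtains k :: int where "x * p powi k = y \<or> x * p powi k = 1 / y"
proof -
  have "etheta (x * y) p = 0 \<or> etheta (x / y) p = 0"
    using assms(1) unfolding etheta_cross_def by simp
  then obtain k :: int where "x * y = p powi k \<or> x / y = p powi k"
    using etheta_eq_0_imp_power_int assms(2,3) by (metis divide_eq_0_iff mult_eq_0_iff)
  then have "x * p powi (- k) = 1 / y \<or> x * p powi (- k) = y"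
    using assms(3) p by (auto simp: power_int_minus field_simps)
  then show ?thesis
    using that by blast
qed

text \<open>The zeros of \<open>etheta_cross p x y\<close> at \<open>x = y\<close> and \<open>x = 1/y\<close> are simple when \<open>\<theta>(y\<^sup>2) \<noteq> 0\<close>.\<close>

lemma etheta_cross_tendsto_quotient:
  assumes F: "F holomorphic_on - {0}" "F y = 0" "F (1 / y) = 0"
    and y: "y \<noteq> 0" "etheta (y * y) p \<noteq> 0"
  shows "\<exists>L. ((\<lambda>z. F z / etheta_cross p z y) \<longlongrightarrow> L) (at y)"
    and "\<exists>L. ((\<lambda>z. F z / etheta_cross p z y) \<longlongrightarrow> L) (at (1 / y))"
proof -
  have "etheta (1 / y / y) p \<noteq> 0"
    using etheta_inverse[of "y * y"] y by simp
  then show "\<exists>L. ((\<lambda>z. F z / etheta_cross p z y) \<longlongrightarrow> L) (at (1 / y))"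
  proof (intro quotient_tendsto_at_simple_zero[OF F(1) _ _ F(3)])
    show "etheta_cross p z y = (z - 1 / y) * (- (y * etheta_cofactor p (z * y) * etheta (z / y) p))" for z
      unfolding etheta_cross_def etheta_eq_cofactor[of "z * y"] using y by (simp add: field_simps)
    show "isCont (\<lambda>z. - (y * etheta_cofactor p (z * y) * etheta (z / y) p)) (1 / y)"
      using y by (intro continuous_intros isCont_etheta isCont_etheta_cofactor) auto
  qed (use y etheta_cofactor_1 in auto)
  show "\<exists>L. ((\<lambda>z. F z / etheta_cross p z y) \<longlongrightarrow> L) (at y)"
  proof (intro quotient_tendsto_at_simple_zero[OF F(1) _ _ F(2)])
    show "etheta_cross p z y = (z - y) * (- (etheta (z * y) p * etheta_cofactor p (z / y) / y))" for z
      unfolding etheta_cross_def etheta_eq_cofactor[of "z / y"] using y by (simp add: field_simps)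
    show "isCont (\<lambda>z. - (etheta (z * y) p * etheta_cofactor p (z / y) / y)) y"
      using y by (intro continuous_intros isCont_etheta isCont_etheta_cofactor) auto
  qed (use y etheta_cofactor_1 in auto)
qed

lemma etheta_addition_generic:
  assumes nz: "x \<noteq> 0" "y \<noteq> 0" "u \<noteq> 0" "v \<noteq> 0"
    and gen: "etheta (u * u) p \<noteq> 0" "etheta_cross p u y \<noteq> 0"
  shows "etheta_cross p x y * etheta_cross p u v - etheta_cross p x v * etheta_cross p u y
       = u / y * etheta_cross p y v * etheta_cross p x u"
proof -
  define F where "F x = etheta_cross p x y * etheta_cross p u v - etheta_cross p x v * etheta_cross p u y" for x
  define D where "D x = etheta_cross p x u" for x
  have F_hol: "F holomorphic_on - {0}"
    unfolding F_def using nz by (intro holomorphic_intros holomorphic_on_etheta_cross)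
  have per: "F (p * x) = 1 / x\<^sup>2 * F x" "D (p * x) = 1 / x\<^sup>2 * D x" if "x \<noteq> 0" for x
    unfolding F_def D_def etheta_cross_mult_p[OF that nz(2)] etheta_cross_mult_p[OF that nz(3)]
      etheta_cross_mult_p[OF that nz(4)] by (simp_all add: right_diff_distrib)
  have F_zeros: "F u = 0" "F (1 / u) = 0"
    unfolding F_def etheta_cross_inverse[OF nz(3,2)] etheta_cross_inverse[OF nz(3,4)] by (simp_all add: field_simps)
  note lim = etheta_cross_tendsto_quotient[OF F_hol F_zeros nz(3) gen(1)]
  \<comment> \<open>every zero of \<open>D\<close> is congruent to \<open>u\<close> or \<open>1/u\<close> modulo powers of \<open>p\<close>\<close>
  have "\<exists>k::int. \<exists>L. ((\<lambda>z. F z / D z) \<longlongrightarrow> L) (at (x * p powi k))" if "x \<noteq> 0" "D x = 0" for x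
    using etheta_cross_eq_0_imp[of x u] that nz(3) lim unfolding D_def by metis
  then obtain C where C: "\<And>x. x \<noteq> 0 \<Longrightarrow> F x = C * D x"
    using mult_periodic_quotient_imp_proportional[OF p F_hol _ nz(2) _ per] holomorphic_on_etheta_cross[OF nz(3)]
      etheta_cross_swap[OF nz(3,2)] nz gen(2) unfolding D_def by auto
  have "etheta_cross p u y * C = etheta_cross p u y * (u / y * etheta_cross p y v)"
    using C[OF nz(2)] unfolding F_def D_def etheta_cross_swap[OF nz(3,2)] etheta_cross_self[OF nz(2)]
    using nz by (auto simp: field_simps)
  then have "C = u / y * etheta_cross p y v"
    using gen(2) mult_left_cancel by blast
  then show ?thesis
    using C[OF nz(1)] unfolding F_def D_def by simp
qed


lemma etheta_addition:
  assumes nz: "x \<noteq> 0" "y \<noteq> 0" "u \<noteq> 0" "v \<noteq> 0"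
  shows "etheta_cross p x y * etheta_cross p u v - etheta_cross p x v * etheta_cross p u y
       = u / y * etheta_cross p y v * etheta_cross p x u"
proof (rule ccontr)
  define \<Phi> where "\<Phi> w = etheta_cross p x y * etheta_cross p w v - etheta_cross p x v * etheta_cross p w y
       - w / y * etheta_cross p y v * etheta_cross p x w" for w
  define Z where "Z = {z. etheta z p = 0}"
  assume "\<not> ?thesis"
  then have "\<Phi> u \<noteq> 0"
    unfolding \<Phi>_def by simp
  moreover have "isCont \<Phi> u"
    unfolding \<Phi>_def etheta_cross_def using nz by (intro continuous_intros isCont_etheta) auto
  ultimately obtain e where e: "e > 0" "\<And>w. dist u w < e \<Longrightarrow> \<Phi> w \<noteq> 0"
    using continuous_at_avoid[of u \<Phi> 0] by auto
  define r where "r = min e (norm u)"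
  have r: "r > 0"
    unfolding r_def using e nz by simp
  \<comment> \<open>by the generic case, \<open>\<Phi>\<close> can only be nonzero where one of three theta values vanishes\<close>
  have sub: "ball u r \<subseteq> {w. w * w \<in> Z} \<union> {w. w * y \<in> Z} \<union> {w. w * (1 / y) \<in> Z}"
  proof
    fix w assume w: "w \<in> ball u r"
    then have w0: "w \<noteq> 0" and "\<Phi> w \<noteq> 0"
      using e(2) unfolding r_def by (auto simp: dist_norm)
    then have "\<not> (etheta (w * w) p \<noteq> 0 \<and> etheta_cross p w y \<noteq> 0)"
      using etheta_addition_generic[OF nz(1,2) w0 nz(4)] unfolding \<Phi>_def by auto
    then show "w \<in> {w. w * w \<in> Z} \<union> {w. w * y \<in> Z} \<union> {w. w * (1 / y) \<in> Z}"
      unfolding Z_def etheta_cross_def by auto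
  qed
  have Z: "countable Z"
    unfolding Z_def by (rule countable_etheta_zeros)
  have sq: "countable {w. w * w \<in> Z}"
  proof (rule countable_subset)
    show "{w. w * w \<in> Z} \<subseteq> csqrt ` Z \<union> (\<lambda>z. - csqrt z) ` Z"
    proof
      fix w assume "w \<in> {w. w * w \<in> Z}"
      moreover have "w\<^sup>2 = (csqrt (w * w))\<^sup>2"
        by (simp only: power2_csqrt) (simp add: power2_eq_square)
      then have "w = csqrt (w * w) \<or> w = - csqrt (w * w)"
        by (rule power2_eq_iff[THEN iffD1])
      ultimately show "w \<in> csqrt ` Z \<union> (\<lambda>z. - csqrt z) ` Z"
        by auto
    qed
  qed (use Z in simp)
  have lin: "countable {w. w * c \<in> Z}" if "c \<noteq> 0" for c
  proof (rule countable_subset)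
    show "{w. w * c \<in> Z} \<subseteq> (\<lambda>z. z / c) ` Z"
    proof
      fix w assume "w \<in> {w. w * c \<in> Z}"
      moreover have "w = w * c / c" using that by simp
      ultimately show "w \<in> (\<lambda>z. z / c) ` Z" by blast
    qed
  qed (use Z in simp)
  have "countable ({w. w * w \<in> Z} \<union> {w. w * y \<in> Z} \<union> {w. w * (1 / y) \<in> Z})"
    using sq lin[OF nz(2)] lin[of "1 / y"] nz(2) by simp
  then have "countable (ball u r)"
    by (rule countable_subset[OF sub])
  then show False
    using uncountable_ball[OF r, of u] by simp
qed

text \<open>The addition formula at \<open>x = \<surd>a q A\<close>, \<open>y = \<surd>a\<close>, \<open>u = \<surd>a x A\<close>, \<open>v = \<surd>a B\<close>.\<close>

lemma etheta_addition_shifted: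
  assumes nz: "a \<noteq> 0" "x \<noteq> 0" "q \<noteq> 0" "A \<noteq> 0" "B \<noteq> 0"
  shows "etheta (x * a * (A * B)) p * etheta (x * (A / B)) p * etheta (a * (q * A)) p * etheta (q * A) p
       = etheta (x * A) p * etheta (x * a * A) p * etheta (q * A / B) p * etheta (a * (q * A * B)) p
         + (q * A / B) * etheta (x * a * (q * A * A)) p * etheta (a * B) p * etheta B p * etheta (x / q) p"
proof -
  define s where "s = csqrt a"
  have s2: "s * s = a" unfolding s_def by (metis power2_csqrt power2_eq_square)
  have s0: "s \<noteq> 0" using s2 nz by auto
  have add: "etheta_cross p (s * (q * A)) s * etheta_cross p (x * s * A) (s * B)
      - etheta_cross p (s * (q * A)) (s * B) * etheta_cross p (x * s * A) s
      = (x * s * A) / s * etheta_cross p s (s * B) * etheta_cross p (s * (q * A)) (x * s * A)"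
    by (rule etheta_addition) (use nz s0 in auto)
  have args: "(s * (q * A)) * s = a * (q * A)" "(s * (q * A)) / s = q * A"
    "(x * s * A) * (s * B) = x * a * (A * B)" "(x * s * A) / (s * B) = x * (A / B)"
    "(s * (q * A)) * (s * B) = a * (q * A * B)" "(s * (q * A)) / (s * B) = q * A / B"
    "(x * s * A) * s = x * a * A" "(x * s * A) / s = x * A" "s * (s * B) = a * B" "s / (s * B) = 1 / B"
    "(s * (q * A)) * (x * s * A) = x * a * (q * A * A)" "(s * (q * A)) / (x * s * A) = 1 / (x / q)"
    using s0 nz by (simp_all add: s2[symmetric] field_simps)
  have inv: "etheta (1 / B) p = - (etheta B p / B)" "etheta (1 / (x / q)) p = - (etheta (x / q) p / (x / q))"
    by (rule etheta_inverse, use nz in simp)+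
  from add[unfolded etheta_cross_def args inv]
  show ?thesis using nz s0 by (simp add: field_simps)
qed

text \<open>The addition formula at \<open>x = A/r\<close>, \<open>y = r\<close>, \<open>u = A/(d r)\<close>, \<open>v = b/r\<close> with \<open>r\<^sup>2 = b c\<close>.\<close>

lemma etheta_addition_symmetric:
  assumes nz: "A \<noteq> 0" "b \<noteq> 0" "c \<noteq> 0" "d \<noteq> 0"
  shows "etheta A p * etheta (A / (b * c)) p * etheta (A / (b * d)) p * etheta (A / (c * d)) p
       = etheta (A / (b * c * d)) p * etheta (A / b) p * etheta (A / c) p * etheta (A / d) p
         + A / (b * c * d) * etheta b p * etheta c p * etheta d p * etheta (A * A / (b * c * d)) p"
proof -
  define r where "r = csqrt (b * c)"
  have r2: "r * r = b * c" unfolding r_def by (metis power2_csqrt power2_eq_square)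
  have r0: "r \<noteq> 0" using r2 nz by auto
  have add: "etheta_cross p (A / r) r * etheta_cross p (A / (d * r)) (b / r)
      - etheta_cross p (A / r) (b / r) * etheta_cross p (A / (d * r)) r
      = (A / (d * r)) / r * etheta_cross p r (b / r) * etheta_cross p (A / r) (A / (d * r))"
    by (rule etheta_addition) (use nz r0 in auto)
  have args: "(A / r) * r = A" "(A / r) / r = A / (b * c)" "(A / (d * r)) * (b / r) = A / (c * d)"
    "(A / (d * r)) / (b / r) = A / (b * d)" "(A / r) * (b / r) = A / c" "(A / r) / (b / r) = A / b"
    "(A / (d * r)) * r = A / d" "(A / (d * r)) / r = A / (b * c * d)" "r * (b / r) = b"
    "r / (b / r) = c" "(A / r) * (A / (d * r)) = A * A / (b * c * d)" "(A / r) / (A / (d * r)) = d"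
    using r0 nz by (simp_all add: r2[symmetric] field_simps)
  from add[unfolded etheta_cross_def args]
  show ?thesis using nz r0 by (simp add: field_simps)
qed

end

section \<open>The Frenkel--Turaev summation\<close>

lemma epoch_0 [simp]: "epoch p q z 0 = 1"
  unfolding epoch_def by simp

lemma epoch_Suc: "epoch p q z (Suc n) = epoch p q z n * etheta (z * q ^ n) p"
  unfolding epoch_def by simp

lemma epoch_add: "epoch p q z (m + n) = epoch p q z m * epoch p q (z * q ^ m) n"
  by (induction n) (simp_all add: epoch_Suc mult_ac power_add)

lemma epoch_rec: "epoch p q z (Suc n) = etheta z p * epoch p q (z * q) n"
  using epoch_add[of p q z 1 n] by (simp add: epoch_def)

lemma epoch_nonzero: "(\<And>i. i < n \<Longrightarrow> etheta (z * q ^ i) p \<noteq> 0) \<Longrightarrow> epoch p q z n \<noteq> 0"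
  unfolding epoch_def by (simp add: prod_zero_iff)

lemma epoch_shift_nonzero:
  "(\<And>i. etheta (z * q ^ i) p \<noteq> 0) \<Longrightarrow> epoch p q (z * q ^ k) n \<noteq> 0"
  by (rule epoch_nonzero) (metis mult.assoc power_add)

lemma epoch_mult_q:
  "etheta z p \<noteq> 0 \<Longrightarrow> epoch p q (z * q) n = epoch p q z n * etheta (z * q ^ n) p / etheta z p"
  using epoch_Suc[of p q z n] epoch_rec[of p q z n] by (simp add: field_simps)

lemma epoch_mult_q2:
  assumes "etheta z p \<noteq> 0" "etheta (z * q) p \<noteq> 0"
  shows "epoch p q (z * q ^ 2) n
    = epoch p q z n * etheta (z * q ^ n) p * etheta (z * q ^ Suc n) p / (etheta z p * etheta (z * q) p)"
proof -
  have "epoch p q (z * q ^ 2) n = epoch p q (z * q * q) n"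
    by (simp add: power2_eq_square mult.assoc)
  also have "\<dots> = epoch p q (z * q) n * etheta (z * q * q ^ n) p / etheta (z * q) p"
    by (rule epoch_mult_q[OF assms(2)])
  also have "epoch p q (z * q) n = epoch p q z n * etheta (z * q ^ n) p / etheta z p"
    by (rule epoch_mult_q[OF assms(1)])
  finally show ?thesis
    by (simp add: mult.assoc)
qed

lemma sum_atMost_Suc_recurrence:
  fixes f g h :: "nat \<Rightarrow> 'a::comm_ring"
  assumes first: "f 0 = \<alpha> * g 0" and last: "f (Suc n) = \<beta> * h n"
    and middle: "\<And>i. i < n \<Longrightarrow> f (Suc i) = \<alpha> * g (Suc i) + \<beta> * h i"
  shows "(\<Sum>j\<le>Suc n. f j) = \<alpha> * (\<Sum>j\<le>n. g j) + \<beta> * (\<Sum>j\<le>n. h j)"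
proof -
  have "(\<Sum>j\<le>Suc n. f j) = f 0 + (\<Sum>i\<le>n. f (Suc i))"
    by (rule sum.atMost_Suc_shift)
  also have "(\<Sum>i\<le>n. f (Suc i)) = (\<Sum>i<n. f (Suc i)) + f (Suc n)"
    by (simp add: lessThan_Suc_atMost[symmetric])
  also have "(\<Sum>i<n. f (Suc i)) = \<alpha> * (\<Sum>i<n. g (Suc i)) + \<beta> * (\<Sum>i<n. h i)"
    using middle by (simp add: sum.distrib sum_distrib_left)
  also have "f 0 + (\<alpha> * (\<Sum>i<n. g (Suc i)) + \<beta> * (\<Sum>i<n. h i) + f (Suc n))
      = \<alpha> * (g 0 + (\<Sum>i<n. g (Suc i))) + \<beta> * ((\<Sum>i<n. h i) + h n)"
    unfolding first last by (simp add: algebra_simps)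
  also have "g 0 + (\<Sum>i<n. g (Suc i)) = (\<Sum>j\<le>n. g j)"
    by (rule sum.atMost_shift[symmetric])
  also have "(\<Sum>i<n. h i) + h n = (\<Sum>j\<le>n. h j)"
    by (simp add: lessThan_Suc_atMost[symmetric])
  finally show ?thesis .
qed

text \<open>The terminating Frenkel--Turaev sum with fifth parameter \<open>e = x a q\<^sup>n\<close>, so that the balancing
  condition reads \<open>b c d x = a q\<close>. The factors involving \<open>q\<^sup>-\<^sup>n\<close> are rewritten by theta reflection,
  which multiplies the classical sum by \<open>\<theta>(x)\<^sub>n / \<theta>(q)\<^sub>n\<close>.\<close>

definition ft_term :: "complex \<Rightarrow> complex \<Rightarrow> complex \<Rightarrow> complex \<Rightarrow> complex \<Rightarrow> complex \<Rightarrow> complex \<Rightarrow> nat \<Rightarrow> nat \<Rightarrow> complex"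
  where "ft_term p q a b c d x n j = etheta (a * q ^ (2 * j)) p / etheta a p
     * (epoch p q a j * epoch p q b j * epoch p q c j * epoch p q d j * epoch p q (x * a * q ^ n) j)
     / (epoch p q q j * epoch p q (a * q / b) j * epoch p q (a * q / c) j * epoch p q (a * q / d) j
        * epoch p q (a * q ^ Suc n) j)
     * (epoch p q x (n - j) / epoch p q q (n - j)) * x ^ j"

definition ft_value :: "complex \<Rightarrow> complex \<Rightarrow> complex \<Rightarrow> complex \<Rightarrow> complex \<Rightarrow> complex \<Rightarrow> nat \<Rightarrow> complex"
  where "ft_value p q a b c d n = epoch p q (a * q) n * epoch p q (a * q / (b * c)) n
     * epoch p q (a * q / (b * d)) n * epoch p q (a * q / (c * d)) n
     / (epoch p q q n * epoch p q (a * q / b) n * epoch p q (a * q / c) n * epoch p q (a * q / d) n)"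

text \<open>Both sides satisfy the recurrence
  \<open>F\<^sub>n\<^sub>+\<^sub>1(a,b,c,d,x) = ft_alpha n \<cdot> F\<^sub>n(a,b,c,d,x) + ft_beta n \<cdot> F\<^sub>n(a q\<^sup>2, b q, c q, d q, x / q)\<close>.\<close>

definition ft_alpha :: "complex \<Rightarrow> complex \<Rightarrow> complex \<Rightarrow> nat \<Rightarrow> complex"
  where "ft_alpha p q x n = etheta (x * q ^ n) p / etheta (q * q ^ n) p"

definition ft_beta :: "complex \<Rightarrow> complex \<Rightarrow> complex \<Rightarrow> complex \<Rightarrow> complex \<Rightarrow> complex \<Rightarrow> complex \<Rightarrow> nat \<Rightarrow> complex"
  where "ft_beta p q a b c d x n = etheta (a * q) p * etheta (a * q ^ 2) p * etheta b p * etheta c p * etheta d p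
     * etheta (x * a * q ^ (2 * n + 1)) p * x * q ^ n
     / (etheta (a * q ^ Suc n) p * etheta (q * q ^ n) p * etheta (a * q / b) p * etheta (a * q / c) p
        * etheta (a * q / d) p * etheta (a * q ^ Suc (Suc n)) p)"

lemmas exponent_simps = power_add power2_eq_square mult_2 mult_2_right

context
  fixes p q a b c d x :: complex
  assumes p: "0 < norm p" "norm p < 1" and q0: "q \<noteq> 0"
    and a0: "a \<noteq> 0" and b0: "b \<noteq> 0" and c0: "c \<noteq> 0" and d0: "d \<noteq> 0" and x0: "x \<noteq> 0"
    and balanced: "b * c * d * x = a * q"
    and gen_a: "\<And>i. etheta (a * q ^ i) p \<noteq> 0"
    and gen_q: "\<And>i. etheta (q * q ^ i) p \<noteq> 0"
    and gen_b: "\<And>i. etheta (a * q / b * q ^ i) p \<noteq> 0"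
    and gen_c: "\<And>i. etheta (a * q / c * q ^ i) p \<noteq> 0"
    and gen_d: "\<And>i. etheta (a * q / d * q ^ i) p \<noteq> 0"
begin

lemma ft_theta_nonzero:
  "etheta a p \<noteq> 0" "etheta (a * q) p \<noteq> 0"
  "etheta (a * q / b) p \<noteq> 0" "etheta (a * q / c) p \<noteq> 0" "etheta (a * q / d) p \<noteq> 0"
  using gen_a[of 0] gen_a[of 1] gen_b[of 0] gen_c[of 0] gen_d[of 0] by simp_all

lemma ft_epoch_nonzero:
  "epoch p q q n \<noteq> 0" "epoch p q (a * q / b) n \<noteq> 0" "epoch p q (a * q / c) n \<noteq> 0"
  "epoch p q (a * q / d) n \<noteq> 0" "epoch p q (a * q ^ k) n \<noteq> 0"
  "epoch p q (a * q / b * q) n \<noteq> 0" "epoch p q (a * q / c * q) n \<noteq> 0"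
  "epoch p q (a * q / d * q) n \<noteq> 0" "epoch p q (a * q ^ k * q) n \<noteq> 0"
  using epoch_shift_nonzero[where z = q and k = 0 and n = n, OF gen_q] epoch_shift_nonzero[where z = "a * q / b" and k = 0 and n = n, OF gen_b]
    epoch_shift_nonzero[where z = "a * q / c" and k = 0 and n = n, OF gen_c] epoch_shift_nonzero[where z = "a * q / d" and k = 0 and n = n, OF gen_d]
    epoch_shift_nonzero[where z = a and k = k and n = n, OF gen_a]
    epoch_shift_nonzero[where z = "a * q / b" and k = 1 and n = n, OF gen_b] epoch_shift_nonzero[where z = "a * q / c" and k = 1 and n = n, OF gen_c]
    epoch_shift_nonzero[where z = "a * q / d" and k = 1 and n = n, OF gen_d] epoch_shift_nonzero[where z = a and k = "Suc k" and n = n, OF gen_a]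
  by (simp_all add: mult_ac)

lemma ft_term_Suc_0: "ft_term p q a b c d x (Suc n) 0 = ft_alpha p q x n * ft_term p q a b c d x n 0"
  unfolding ft_term_def ft_alpha_def by (simp add: epoch_Suc mult_ac)

lemma ft_term_Suc_last:
  "ft_term p q a b c d x (Suc n) (Suc n)
    = ft_beta p q a b c d x n * ft_term p q (a * q ^ 2) (b * q) (c * q) (d * q) (x / q) n n"
proof -
  have args: "etheta (a * q ^ 2 * q ^ (2 * n)) p = etheta (a * q ^ (2 * Suc n)) p"
    "epoch p q (x / q * (a * q ^ 2) * q ^ n) n = epoch p q (x * a * q ^ Suc n) n"
    "etheta (x * a * q ^ Suc n * q ^ n) p = etheta (x * a * q ^ (2 * n + 1)) p"
    "epoch p q (a * q ^ 2 * q / (b * q)) n = epoch p q (a * q / b * q) n"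
    "epoch p q (a * q ^ 2 * q / (c * q)) n = epoch p q (a * q / c * q) n"
    "epoch p q (a * q ^ 2 * q / (d * q)) n = epoch p q (a * q / d * q) n"
    "epoch p q (a * q ^ 2 * q ^ Suc n) n = epoch p q (a * q ^ Suc (Suc n) * q) n"
    using q0 by (simp_all add: algebra_simps exponent_simps)
  have nonzero: "epoch p q q n \<noteq> 0" "etheta (q * q ^ n) p \<noteq> 0" "epoch p q (a * q / b * q) n \<noteq> 0"
    "epoch p q (a * q / c * q) n \<noteq> 0" "epoch p q (a * q / d * q) n \<noteq> 0"
    "epoch p q (a * q ^ Suc (Suc n) * q) n \<noteq> 0" "etheta (a * q ^ Suc (Suc n)) p \<noteq> 0"
    "etheta (a * q ^ Suc n) p \<noteq> 0" "etheta (a * q ^ 2) p \<noteq> 0"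
    using ft_epoch_nonzero(1,6-8) ft_epoch_nonzero(9)[of "Suc (Suc n)"] gen_q[of n]
      gen_a[of "Suc (Suc n)"] gen_a[of "Suc n"] gen_a[of 2] by simp_all
  show ?thesis
    unfolding ft_term_def ft_beta_def args(1,2,4-7) epoch_mult_q2[OF ft_theta_nonzero(1,2)]
      epoch_Suc[of p q "x * a * q ^ Suc n"] args(3) epoch_Suc[of p q q n] epoch_Suc[of p q a n]
      epoch_rec[of p q b] epoch_rec[of p q c] epoch_rec[of p q d] epoch_rec[of p q "a * q / b"]
      epoch_rec[of p q "a * q / c"] epoch_rec[of p q "a * q / d"] epoch_rec[of p q "a * q ^ Suc (Suc n)"]
    using nonzero ft_theta_nonzero q0 x0 by (simp add: field_simps)
qed

lemma etheta_addition_ft_term: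
  assumes n: "n = Suc (i + l)"
  shows "etheta (x * a * q ^ Suc n * q ^ i) p * etheta (x * q ^ l) p * etheta (a * q ^ Suc n) p * etheta (q * q ^ n) p
       = etheta (x * q ^ n) p * etheta (x * a * q ^ n) p * etheta (q * q ^ l) p * etheta (a * q ^ Suc (Suc n) * q ^ i) p
         + (q * q ^ l) * etheta (x * a * q ^ (2 * n + 1)) p * etheta (a * q ^ Suc i) p * etheta (q * q ^ i) p
           * etheta (x / q) p"
proof -
  have args: "x * a * (q ^ n * q ^ Suc i) = x * a * q ^ Suc n * q ^ i" "x * (q ^ n / q ^ Suc i) = x * q ^ l"
    "a * (q * q ^ n) = a * q ^ Suc n" "q * q ^ n / q ^ Suc i = q * q ^ l"
    "a * (q * q ^ n * q ^ Suc i) = a * q ^ Suc (Suc n) * q ^ i" "x * a * (q * q ^ n * q ^ n) = x * a * q ^ (2 * n + 1)"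
    unfolding n using q0 by (simp_all add: algebra_simps exponent_simps field_simps)
  have "etheta (q ^ Suc i) p = etheta (q * q ^ i) p"
    by simp
  with etheta_addition_shifted[OF p a0 x0 q0, where A = "q ^ n" and B = "q ^ Suc i"] q0
  show ?thesis
    unfolding args by simp
qed

lemma ft_term_Suc_Suc:
  assumes "i < n"
  shows "ft_term p q a b c d x (Suc n) (Suc i) = ft_alpha p q x n * ft_term p q a b c d x n (Suc i)
          + ft_beta p q a b c d x n * ft_term p q (a * q ^ 2) (b * q) (c * q) (d * q) (x / q) n i"
proof -
  obtain l where n: "n = Suc (i + l)"
    using assms by (metis less_iff_Suc_add)
  have diffs: "Suc n - Suc i = Suc l" "n - Suc i = l" "n - i = Suc l"
    using n by auto
  have args: "etheta (a * q ^ 2 * q ^ (2 * i)) p = etheta (a * q ^ (2 * Suc i)) p"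
    "epoch p q (x / q * (a * q ^ 2) * q ^ n) i = epoch p q (x * a * q ^ Suc n) i"
    "epoch p q (x * a * q ^ n * q) i = epoch p q (x * a * q ^ Suc n) i"
    "epoch p q (a * q ^ 2 * q / (b * q)) i = epoch p q (a * q / b * q) i"
    "epoch p q (a * q ^ 2 * q / (c * q)) i = epoch p q (a * q / c * q) i"
    "epoch p q (a * q ^ 2 * q / (d * q)) i = epoch p q (a * q / d * q) i"
    "epoch p q (a * q ^ 2 * q ^ Suc n) i = epoch p q (a * q ^ Suc (Suc n) * q) i"
    "epoch p q (a * q ^ Suc n * q) i = epoch p q (a * q ^ Suc (Suc n)) i"
    "epoch p q (x / q * q) l = epoch p q x l" "q ^ n / q ^ i = q * q ^ l"
    unfolding n using q0 by (simp_all add: algebra_simps exponent_simps field_simps)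
  have shifts: "epoch p q (a * q / b * q) i = epoch p q (a * q / b) i * etheta (a * q / b * q ^ i) p / etheta (a * q / b) p"
    "epoch p q (a * q / c * q) i = epoch p q (a * q / c) i * etheta (a * q / c * q ^ i) p / etheta (a * q / c) p"
    "epoch p q (a * q / d * q) i = epoch p q (a * q / d) i * etheta (a * q / d * q ^ i) p / etheta (a * q / d) p"
    "epoch p q (a * q ^ Suc (Suc n) * q) i
      = epoch p q (a * q ^ Suc (Suc n)) i * etheta (a * q ^ Suc (Suc n) * q ^ i) p / etheta (a * q ^ Suc (Suc n)) p"
    by (rule epoch_mult_q, use ft_theta_nonzero gen_a[of "Suc (Suc n)"] in simp)+
  define Q where "Q = etheta (a * q ^ (2 * Suc i)) p / etheta a p * (epoch p q a i * etheta (a * q ^ i) p)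
     * (etheta b p * epoch p q (b * q) i) * (etheta c p * epoch p q (c * q) i) * (etheta d p * epoch p q (d * q) i)
     * epoch p q (x * a * q ^ Suc n) i * epoch p q x l
     / (epoch p q q i * etheta (q * q ^ i) p * (epoch p q (a * q / b) i * etheta (a * q / b * q ^ i) p)
        * (epoch p q (a * q / c) i * etheta (a * q / c * q ^ i) p) * (epoch p q (a * q / d) i * etheta (a * q / d * q ^ i) p)
        * epoch p q (a * q ^ Suc (Suc n)) i * epoch p q q l) * x ^ Suc i"
  have nonzero: "etheta a p \<noteq> 0" "epoch p q q i \<noteq> 0" "etheta (q * q ^ i) p \<noteq> 0"
    "epoch p q (a * q / b) i \<noteq> 0" "epoch p q (a * q / c) i \<noteq> 0" "epoch p q (a * q / d) i \<noteq> 0"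
    "etheta (a * q / b * q ^ i) p \<noteq> 0" "etheta (a * q / c * q ^ i) p \<noteq> 0" "etheta (a * q / d * q ^ i) p \<noteq> 0"
    "epoch p q (a * q ^ Suc (Suc n)) i \<noteq> 0" "etheta (a * q ^ Suc (Suc n) * q ^ i) p \<noteq> 0"
    "epoch p q q l \<noteq> 0" "etheta (q * q ^ l) p \<noteq> 0" "etheta (a * q ^ Suc n) p \<noteq> 0" "etheta (q * q ^ n) p \<noteq> 0"
    "etheta (a * q) p \<noteq> 0" "etheta (a * q ^ 2) p \<noteq> 0" "etheta (a * q ^ Suc (Suc n)) p \<noteq> 0"
    "etheta (a * q / b) p \<noteq> 0" "etheta (a * q / c) p \<noteq> 0" "etheta (a * q / d) p \<noteq> 0"
    using ft_theta_nonzero ft_epoch_nonzero(1-4) ft_epoch_nonzero(5)[of "Suc (Suc n)"] gen_q gen_b gen_c gen_d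
      gen_a[of "Suc n"] gen_a[of 2] gen_a[of "Suc (Suc n)"] gen_a[of "Suc (Suc n) + i"]
    by (simp_all add: algebra_simps exponent_simps)
  note nonzero = nonzero a0 b0 c0 d0 x0 q0
  have lhs: "ft_term p q a b c d x (Suc n) (Suc i) = Q * (etheta (x * a * q ^ Suc n * q ^ i) p * etheta (x * q ^ l) p
      / (etheta (a * q ^ Suc (Suc n) * q ^ i) p * etheta (q * q ^ l) p))"
    unfolding ft_term_def diffs Q_def epoch_rec[of p q b i] epoch_rec[of p q c i] epoch_rec[of p q d i]
      epoch_Suc[of p q a i] epoch_Suc[of p q "x * a * q ^ Suc n" i] epoch_Suc[of p q q i]
      epoch_Suc[of p q "a * q / b" i] epoch_Suc[of p q "a * q / c" i] epoch_Suc[of p q "a * q / d" i]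
      epoch_Suc[of p q "a * q ^ Suc (Suc n)" i] epoch_Suc[of p q x l] epoch_Suc[of p q q l]
    using nonzero by (simp add: field_simps)
  have alpha: "ft_alpha p q x n * ft_term p q a b c d x n (Suc i)
      = Q * (ft_alpha p q x n * (etheta (x * a * q ^ n) p / etheta (a * q ^ Suc n) p))"
    unfolding ft_term_def diffs Q_def epoch_rec[of p q b i] epoch_rec[of p q c i] epoch_rec[of p q d i]
      epoch_rec[of p q "x * a * q ^ n" i] epoch_rec[of p q "a * q ^ Suc n" i] args(3,8)
      epoch_Suc[of p q a i] epoch_Suc[of p q q i]
      epoch_Suc[of p q "a * q / b" i] epoch_Suc[of p q "a * q / c" i] epoch_Suc[of p q "a * q / d" i]
    using nonzero by (simp add: field_simps)
  have beta: "ft_beta p q a b c d x n * ft_term p q (a * q ^ 2) (b * q) (c * q) (d * q) (x / q) n i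
      = Q * (q ^ n / q ^ i * etheta (a * q ^ Suc i) p * etheta (q * q ^ i) p * etheta (x * a * q ^ (2 * n + 1)) p
        * etheta (x / q) p / (etheta (a * q ^ Suc n) p * etheta (q * q ^ n) p
        * etheta (a * q ^ Suc (Suc n) * q ^ i) p * etheta (q * q ^ l) p))"
    unfolding ft_term_def diffs Q_def ft_beta_def args(1,2,4-7) shifts epoch_mult_q2[OF ft_theta_nonzero(1,2)]
      epoch_rec[of p q "x / q" l] args(9) epoch_Suc[of p q q l]
    using nonzero by (simp add: field_simps)
  have "etheta (x * a * q ^ Suc n * q ^ i) p * etheta (x * q ^ l) p
      / (etheta (a * q ^ Suc (Suc n) * q ^ i) p * etheta (q * q ^ l) p)
     = ft_alpha p q x n * (etheta (x * a * q ^ n) p / etheta (a * q ^ Suc n) p)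
      + q ^ n / q ^ i * etheta (a * q ^ Suc i) p * etheta (q * q ^ i) p * etheta (x * a * q ^ (2 * n + 1)) p
        * etheta (x / q) p / (etheta (a * q ^ Suc n) p * etheta (q * q ^ n) p
        * etheta (a * q ^ Suc (Suc n) * q ^ i) p * etheta (q * q ^ l) p)"
    unfolding ft_alpha_def args(10) using nonzero etheta_addition_ft_term[OF n] by (simp add: field_simps)
  then show ?thesis
    unfolding lhs alpha beta by (simp add: distrib_left)
qed

lemma etheta_addition_ft_value:
  "etheta (a * q * q ^ n) p * etheta (a * q / (b * c) * q ^ n) p * etheta (a * q / (b * d) * q ^ n) p
     * etheta (a * q / (c * d) * q ^ n) p
   = etheta (x * q ^ n) p * etheta (a * q / b * q ^ n) p * etheta (a * q / c * q ^ n) p * etheta (a * q / d * q ^ n) p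
     + x * q ^ n * etheta b p * etheta c p * etheta d p * etheta (x * a * q ^ (2 * n + 1)) p"
proof -
  have x: "x = a * q / (b * c * d)"
    using balanced b0 c0 d0 by (simp add: field_simps)
  have args: "a * q * q ^ n / (b * c) = a * q / (b * c) * q ^ n" "a * q * q ^ n / (b * d) = a * q / (b * d) * q ^ n"
    "a * q * q ^ n / (c * d) = a * q / (c * d) * q ^ n" "a * q * q ^ n / (b * c * d) = x * q ^ n"
    "a * q * q ^ n / b = a * q / b * q ^ n" "a * q * q ^ n / c = a * q / c * q ^ n" "a * q * q ^ n / d = a * q / d * q ^ n"
    "a * q * q ^ n * (a * q * q ^ n) / (b * c * d) = x * a * q ^ (2 * n + 1)"
    unfolding x by (simp_all add: algebra_simps exponent_simps)
  show ?thesis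
    using etheta_addition_symmetric[OF p, where A = "a * q * q ^ n" and b = b and c = c and d = d] a0 b0 c0 d0 q0
    unfolding args by simp
qed

lemma ft_value_Suc:
  "ft_value p q a b c d (Suc n)
    = ft_alpha p q x n * ft_value p q a b c d n + ft_beta p q a b c d x n * ft_value p q (a * q ^ 2) (b * q) (c * q) (d * q) n"
proof -
  have "etheta (a * q * q) p \<noteq> 0"
    using gen_a[of 2] by (simp add: power2_eq_square mult.assoc)
  then have shift2: "epoch p q (a * q ^ 2 * q) n
      = epoch p q (a * q) n * etheta (a * q * q ^ n) p * etheta (a * q * q ^ Suc n) p / (etheta (a * q) p * etheta (a * q * q) p)"
    using epoch_mult_q2[where z = "a * q" and n = n] ft_theta_nonzero(2) by (simp add: mult_ac)
  have args: "epoch p q (a * q ^ 2 * q / (b * q * (c * q))) n = epoch p q (a * q / (b * c)) n"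
    "epoch p q (a * q ^ 2 * q / (b * q * (d * q))) n = epoch p q (a * q / (b * d)) n"
    "epoch p q (a * q ^ 2 * q / (c * q * (d * q))) n = epoch p q (a * q / (c * d)) n"
    "epoch p q (a * q ^ 2 * q / (b * q)) n = epoch p q (a * q / b * q) n"
    "epoch p q (a * q ^ 2 * q / (c * q)) n = epoch p q (a * q / c * q) n"
    "epoch p q (a * q ^ 2 * q / (d * q)) n = epoch p q (a * q / d * q) n"
    "etheta (a * q ^ Suc n) p = etheta (a * q * q ^ n) p" "etheta (a * q ^ Suc (Suc n)) p = etheta (a * q * q ^ Suc n) p"
    "etheta (a * q ^ 2) p = etheta (a * q * q) p"
    using q0 by (simp_all add: algebra_simps exponent_simps)
  have shifts: "epoch p q (a * q / b * q) n = epoch p q (a * q / b) n * etheta (a * q / b * q ^ n) p / etheta (a * q / b) p"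
    "epoch p q (a * q / c * q) n = epoch p q (a * q / c) n * etheta (a * q / c * q ^ n) p / etheta (a * q / c) p"
    "epoch p q (a * q / d * q) n = epoch p q (a * q / d) n * etheta (a * q / d * q ^ n) p / etheta (a * q / d) p"
    by (rule epoch_mult_q, use ft_theta_nonzero in simp)+
  have nonzero: "epoch p q q n \<noteq> 0" "epoch p q (a * q / b) n \<noteq> 0" "epoch p q (a * q / c) n \<noteq> 0"
    "epoch p q (a * q / d) n \<noteq> 0" "etheta (q * q ^ n) p \<noteq> 0" "etheta (a * q / b * q ^ n) p \<noteq> 0"
    "etheta (a * q / c * q ^ n) p \<noteq> 0" "etheta (a * q / d * q ^ n) p \<noteq> 0"
    "etheta (a * q * q ^ n) p \<noteq> 0" "etheta (a * q * q ^ Suc n) p \<noteq> 0" "etheta (a * q * q) p \<noteq> 0"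
    using ft_epoch_nonzero(1-4) gen_q gen_b gen_c gen_d gen_a[of "Suc n"] gen_a[of "Suc (Suc n)"] gen_a[of 2]
    by (simp_all add: algebra_simps exponent_simps)
  define R where "R = etheta (q * q ^ n) p * etheta (a * q / b * q ^ n) p * etheta (a * q / c * q ^ n) p
    * etheta (a * q / d * q ^ n) p"
  have "ft_value p q a b c d (Suc n) = ft_value p q a b c d n * (etheta (a * q * q ^ n) p
      * etheta (a * q / (b * c) * q ^ n) p * etheta (a * q / (b * d) * q ^ n) p * etheta (a * q / (c * d) * q ^ n) p / R)"
    unfolding ft_value_def epoch_Suc R_def using nonzero by (simp add: field_simps)
  also have "\<dots> = ft_value p q a b c d n * (etheta (x * q ^ n) p / etheta (q * q ^ n) p
      + x * q ^ n * etheta b p * etheta c p * etheta d p * etheta (x * a * q ^ (2 * n + 1)) p / R)"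
    unfolding etheta_addition_ft_value R_def using nonzero by (simp add: field_simps)
  also have "\<dots> = ft_alpha p q x n * ft_value p q a b c d n
      + ft_beta p q a b c d x n * ft_value p q (a * q ^ 2) (b * q) (c * q) (d * q) n"
    unfolding ft_value_def ft_beta_def ft_alpha_def shift2 args shifts R_def
    using nonzero ft_theta_nonzero by (simp add: field_simps)
  finally show ?thesis .
qed

end

theorem frenkel_turaev_sum:
  fixes p q a b c d x :: complex
  assumes p: "0 < norm p" "norm p < 1" and q0: "q \<noteq> 0"
    and nz: "a \<noteq> 0" "b \<noteq> 0" "c \<noteq> 0" "d \<noteq> 0" "x \<noteq> 0"
    and balanced: "b * c * d * x = a * q"
    and gen_a: "\<And>i. etheta (a * q ^ i) p \<noteq> 0"
    and gen_q: "\<And>i. etheta (q * q ^ i) p \<noteq> 0"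
    and gen_b: "\<And>i. etheta (a * q / b * q ^ i) p \<noteq> 0"
    and gen_c: "\<And>i. etheta (a * q / c * q ^ i) p \<noteq> 0"
    and gen_d: "\<And>i. etheta (a * q / d * q ^ i) p \<noteq> 0"
  shows "(\<Sum>j\<le>n. ft_term p q a b c d x n j) = ft_value p q a b c d n"
  using nz balanced gen_a gen_b gen_c gen_d
proof (induction n arbitrary: a b c d x)
  case 0
  then have "etheta a p \<noteq> 0" using "0.prems"(7)[of 0] by simp
  then show ?case unfolding ft_term_def ft_value_def by simp
next
  case (Suc n)
  note hyps = p q0 Suc.prems(1-7) gen_q Suc.prems(8-10)
  have shifted_gen: "etheta (a * q\<^sup>2 * q / (z * q) * q ^ i) p = etheta (a * q / z * q ^ Suc i) p"
    if "z \<noteq> 0" for z i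
    using q0 that by (simp add: field_simps power2_eq_square)
  have "(\<Sum>j\<le>n. ft_term p q (a * q\<^sup>2) (b * q) (c * q) (d * q) (x / q) n j)
      = ft_value p q (a * q\<^sup>2) (b * q) (c * q) (d * q) n"
  proof (rule Suc.IH)
    show "b * q * (c * q) * (d * q) * (x / q) = a * q\<^sup>2 * q"
      using Suc.prems(6) q0 by (simp add: field_simps power2_eq_square)
    show "etheta (a * q\<^sup>2 * q ^ i) p \<noteq> 0" for i
      using Suc.prems(7)[of "2 + i"] by (simp add: power_add mult.assoc power2_eq_square)
    show "etheta (a * q\<^sup>2 * q / (b * q) * q ^ i) p \<noteq> 0"
      "etheta (a * q\<^sup>2 * q / (c * q) * q ^ i) p \<noteq> 0"
      "etheta (a * q\<^sup>2 * q / (d * q) * q ^ i) p \<noteq> 0" for i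
      unfolding shifted_gen[OF Suc.prems(2)] shifted_gen[OF Suc.prems(3)] shifted_gen[OF Suc.prems(4)]
      by (fact Suc.prems(8-10))+
  qed (use Suc.prems q0 in auto)
  moreover have "(\<Sum>j\<le>n. ft_term p q a b c d x n j) = ft_value p q a b c d n"
    by (rule Suc.IH[OF Suc.prems])
  ultimately show ?case
    using sum_atMost_Suc_recurrence[OF ft_term_Suc_0[OF hyps] ft_term_Suc_last[OF hyps] ft_term_Suc_Suc[OF hyps]]
    by (simp add: ft_value_Suc[OF hyps])
qed

section \<open>The matrix identity\<close>

lemma Mmat_of_le: "m \<le> N \<Longrightarrow> Mmat p q N m a k =
        (epoch p q k (N + m) * epoch p q (k / a) (N - m))
        / (epoch p q (q * a) (N + m) * epoch p q q (N - m))
        * (etheta (a * q ^ (2 * m)) p / etheta a p) * a ^ (N - m)"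
  unfolding Mmat_def by simp

context
  fixes p q a k t b c :: complex and N m L :: nat
  assumes p: "0 < norm p" "norm p < 1" and q0: "q \<noteq> 0"
    and a0: "a \<noteq> 0" and k0: "k \<noteq> 0" and t0: "t \<noteq> 0" and b0: "b \<noteq> 0" and c0: "c \<noteq> 0"
    and rel: "k * b * c = q * a * t"
    and gq: "\<And>j. etheta (q * q ^ j) p \<noteq> 0"
    and ga: "\<And>j. etheta (a * q ^ j) p \<noteq> 0"
    and gt: "\<And>j. etheta (t * q ^ j) p \<noteq> 0"
    and gab: "\<And>j. etheta (a * q / b * q ^ j) p \<noteq> 0"
    and gac: "\<And>j. etheta (a * q / c * q ^ j) p \<noteq> 0"
    and gtb: "\<And>j. etheta (t * q / b * q ^ j) p \<noteq> 0"
    and gtc: "\<And>j. etheta (t * q / c * q ^ j) p \<noteq> 0"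
    and NmL: "N = m + L"
begin

lemma ft_instance:
  "(\<Sum>j\<le>L. ft_term p q (a * q ^ (2 * m)) (b * q ^ m) (c * q ^ m) (a / t) (k / a) L j)
     = ft_value p q (a * q ^ (2 * m)) (b * q ^ m) (c * q ^ m) (a / t) L"
proof (rule frenkel_turaev_sum[OF p q0])
  have "b * q ^ m * (c * q ^ m) * (a / t) * (k / a) = (k * b * c) * q ^ (2 * m) / t"
    using a0 t0 by (simp add: field_simps exponent_simps)
  then show "b * q ^ m * (c * q ^ m) * (a / t) * (k / a) = a * q ^ (2 * m) * q"
    unfolding rel using t0 by (simp add: field_simps)
  fix i
  have args: "a * q ^ (2 * m) * q / (b * q ^ m) * q ^ i = a * q / b * q ^ (m + i)"
    "a * q ^ (2 * m) * q / (c * q ^ m) * q ^ i = a * q / c * q ^ (m + i)"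
    "a * q ^ (2 * m) * q / (a / t) * q ^ i = t * q ^ (2 * m + 1 + i)"
    using q0 a0 t0 by (simp_all add: field_simps algebra_simps exponent_simps)
  show "etheta (a * q ^ (2 * m) * q / (b * q ^ m) * q ^ i) p \<noteq> 0"
    "etheta (a * q ^ (2 * m) * q / (c * q ^ m) * q ^ i) p \<noteq> 0"
    "etheta (a * q ^ (2 * m) * q / (a / t) * q ^ i) p \<noteq> 0"
    unfolding args by (fact gab gac gt)+
  show "etheta (a * q ^ (2 * m) * q ^ i) p \<noteq> 0"
    using ga[of "2 * m + i"] by (simp add: power_add mult.assoc)
qed (use a0 b0 c0 t0 k0 q0 gq in auto)

lemma mdm_epoch_nonzero:
  "epoch p q (q * a * q ^ s) n \<noteq> 0" "epoch p q (q * t * q ^ s) n \<noteq> 0"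
  "epoch p q (a * q / b * q ^ s) n \<noteq> 0" "epoch p q (a * q / c * q ^ s) n \<noteq> 0"
  "epoch p q (t * q / b * q ^ s) n \<noteq> 0" "epoch p q (t * q / c * q ^ s) n \<noteq> 0"
  "epoch p q q n \<noteq> 0" "epoch p q (a * q ^ s) n \<noteq> 0"
  using epoch_shift_nonzero[where k = "Suc s", OF ga] epoch_shift_nonzero[where k = "Suc s", OF gt]
    epoch_shift_nonzero[OF gab] epoch_shift_nonzero[OF gac] epoch_shift_nonzero[OF gtb]
    epoch_shift_nonzero[OF gtc] epoch_shift_nonzero[where k = 0, OF gq] epoch_shift_nonzero[OF ga]
  by (simp_all add: mult_ac)

text \<open>The factor by which the summands of \<open>M(a,k) D(a;b,c) M(t,a)\<close> (hence \<open>mdm\<close>) and its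
  right-hand side differ from the terms and the value of a Frenkel--Turaev sum.\<close>

definition mdm_prefactor :: complex
  where "mdm_prefactor = epoch p q k (N + m) / epoch p q (q * a) (N + m)
   * (etheta (a * q ^ (2 * m)) p / etheta a p) * a ^ L
   * (epoch p q b m * epoch p q c m / (epoch p q (a * q / b) m * epoch p q (a * q / c) m) * (a * q / (b * c)) ^ m)
   * (epoch p q a (2 * m) / epoch p q (q * t) (2 * m)) * (etheta (t * q ^ (2 * m)) p / etheta t p)"

lemma mdm_summand_eq:
  assumes j: "j \<le> L"
  shows "Mmat p q N (m + j) a k * Dmat p q (m + j) a b c * Mmat p q (m + j) m t a
       = mdm_prefactor * ft_term p q (a * q ^ (2 * m)) (b * q ^ m) (c * q ^ m) (a / t) (k / a) L j"
proof -
  have indices: "N + (m + j) = (N + m) + j" "N - (m + j) = L - j" "m + j + m = 2 * m + j" "m + j - m = j"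
    "m + j \<le> N" "m \<le> m + j"
    using NmL j by auto
  have args: "etheta (a * q ^ (2 * m) * q ^ (2 * j)) p = etheta (a * q ^ (2 * (m + j))) p"
    "epoch p q (k / a * (a * q ^ (2 * m)) * q ^ L) j = epoch p q (k * q ^ (N + m)) j"
    "epoch p q (a * q ^ (2 * m) * q / (b * q ^ m)) j = epoch p q (a * q / b * q ^ m) j"
    "epoch p q (a * q ^ (2 * m) * q / (c * q ^ m)) j = epoch p q (a * q / c * q ^ m) j"
    "epoch p q (a * q ^ (2 * m) * q / (a / t)) j = epoch p q (q * t * q ^ (2 * m)) j"
    "epoch p q (a * q ^ (2 * m) * q ^ Suc L) j = epoch p q (q * a * q ^ (N + m)) j"
    "a * q / (b * c) = k / t" "a ^ (L - j) = a ^ L / a ^ j"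
    using NmL j rel q0 a0 b0 c0 t0 by (simp_all add: algebra_simps exponent_simps field_simps power_diff)
  have nonzero: "etheta a p \<noteq> 0" "etheta (a * q ^ (2 * m)) p \<noteq> 0" "etheta t p \<noteq> 0"
    "epoch p q (q * a) (N + m) \<noteq> 0" "epoch p q (q * t) (2 * m) \<noteq> 0"
    "epoch p q (a * q / b) m \<noteq> 0" "epoch p q (a * q / c) m \<noteq> 0"
    using ga[of 0] ga[of "2 * m"] gt[of 0] mdm_epoch_nonzero(1,2,3,4)[of 0] by simp_all
  show ?thesis
    unfolding Mmat_of_le[OF indices(5)] Mmat_of_le[OF indices(6)] Dmat_def ft_term_def mdm_prefactor_def
      indices(1-4) args epoch_add[of p q _ "N + m" j] epoch_add[of p q _ m j] epoch_add[of p q _ "2 * m" j]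
      power_add power_divide
    using nonzero mdm_epoch_nonzero a0 t0 b0 c0 k0 by (simp add: field_simps)
qed

lemma mdm_rhs_eq:
  "Dmat p q N k (q * t / c) (q * t / b) * Mmat p q N m t k * Dmat p q m t b c
     = mdm_prefactor * ft_value p q (a * q ^ (2 * m)) (b * q ^ m) (c * q ^ m) (a / t) L"
proof -
  have indices: "N - m = L" "N + m = 2 * m + L" "m \<le> N" "Suc (N + m) = 2 * m + Suc L"
    using NmL by auto
  have k_t: "k / t = a * q / (b * c)"
    using rel b0 c0 t0 by (simp add: field_simps)
  have ratios: "a * q ^ (2 * m) * q / (b * q ^ m * (c * q ^ m)) = k / t"
    "k * q / (q * t / c) = a * q / b" "k * q / (q * t / b) = a * q / c" "k * q / (q * t / c * (q * t / b)) = a / t"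
    unfolding k_t using rel q0 a0 b0 c0 t0 by (simp_all add: field_simps exponent_simps)
  have args: "epoch p q (a * q ^ (2 * m) * q / (b * q ^ m * (a / t))) L = epoch p q (q * t / b * q ^ m) L"
    "epoch p q (a * q ^ (2 * m) * q / (c * q ^ m * (a / t))) L = epoch p q (q * t / c * q ^ m) L"
    "epoch p q (a * q ^ (2 * m) * q / (b * q ^ m)) L = epoch p q (a * q / b * q ^ m) L"
    "epoch p q (a * q ^ (2 * m) * q / (c * q ^ m)) L = epoch p q (a * q / c * q ^ m) L"
    "epoch p q (a * q ^ (2 * m) * q / (a / t)) L = epoch p q (q * t * q ^ (2 * m)) L"
    "epoch p q (t * q / b) m = epoch p q (q * t / b) m" "epoch p q (t * q / c) m = epoch p q (q * t / c) m"
    using rel q0 a0 b0 c0 t0 by (simp_all add: algebra_simps exponent_simps field_simps)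
  have splits: "epoch p q (q * t / c) N = epoch p q (q * t / c) m * epoch p q (q * t / c * q ^ m) L"
    "epoch p q (q * t / b) N = epoch p q (q * t / b) m * epoch p q (q * t / b * q ^ m) L"
    "epoch p q (a * q / b) N = epoch p q (a * q / b) m * epoch p q (a * q / b * q ^ m) L"
    "epoch p q (a * q / c) N = epoch p q (a * q / c) m * epoch p q (a * q / c * q ^ m) L"
    "epoch p q (q * t) (N + m) = epoch p q (q * t) (2 * m) * epoch p q (q * t * q ^ (2 * m)) L"
    unfolding indices(2) unfolding NmL by (rule epoch_add)+
  have "epoch p q a (2 * m) * (etheta (a * q ^ (2 * m)) p * epoch p q (a * q ^ (2 * m) * q) L)
      = epoch p q a (Suc (N + m))"
    unfolding indices(4) epoch_add epoch_rec ..
  also have "\<dots> = etheta a p * epoch p q (q * a) (N + m)"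
    using epoch_rec[of p q a "N + m"] by (simp add: mult.commute)
  finally have shift: "epoch p q (a * q ^ (2 * m) * q) L
      = etheta a p * epoch p q (q * a) (N + m) / (epoch p q a (2 * m) * etheta (a * q ^ (2 * m)) p)"
    using mdm_epoch_nonzero(8)[of 0 "2 * m"] ga[of "2 * m"] by (simp add: field_simps)
  have pw: "(a / t) ^ N * t ^ L * (t * q / (b * c)) ^ m = a ^ L * (a * q / (b * c)) ^ m"
    unfolding NmL power_add power_divide power_mult_distrib using t0 by (simp add: field_simps)
  show ?thesis
    unfolding Dmat_def Mmat_of_le[OF indices(3)] ft_value_def mdm_prefactor_def ratios args shift indices(1) splits
    using pw ga[of 0] ga[of "2 * m"] gt[of 0] mdm_epoch_nonzero mdm_epoch_nonzero(8)[of 0 "2 * m"]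
      mdm_epoch_nonzero(1,2,5,6)[of 0] mdm_epoch_nonzero(3,4)[of 0 m] a0 t0 b0 c0 k0 q0
    by (simp add: field_simps mult.commute)
qed

lemma mdm_sum_eq:
  "(\<Sum>n = m..N. Mmat p q N n a k * Dmat p q n a b c * Mmat p q n m t a)
     = Dmat p q N k (q * t / c) (q * t / b) * Mmat p q N m t k * Dmat p q m t b c"
proof -
  have "(\<Sum>n = m..N. Mmat p q N n a k * Dmat p q n a b c * Mmat p q n m t a)
      = (\<Sum>j\<le>L. Mmat p q N (m + j) a k * Dmat p q (m + j) a b c * Mmat p q (m + j) m t a)"
    unfolding NmL atLeast0AtMost[symmetric]
    using sum.shift_bounds_cl_nat_ivl[of "\<lambda>n. Mmat p q (m + L) n a k * Dmat p q n a b c * Mmat p q n m t a" 0 m L]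
    by (simp add: add.commute)
  also have "\<dots> = mdm_prefactor * (\<Sum>j\<le>L. ft_term p q (a * q ^ (2 * m)) (b * q ^ m) (c * q ^ m) (a / t) (k / a) L j)"
    by (simp add: mdm_summand_eq sum_distrib_left)
  also have "\<dots> = Dmat p q N k (q * t / c) (q * t / b) * Mmat p q N m t k * Dmat p q m t b c"
    unfolding ft_instance mdm_rhs_eq ..
  finally show ?thesis .
qed

end

theorem mainTheorem4:
  fixes p q a k t b c :: complex and N m :: nat
  assumes p: "0 < norm p" "norm p < 1"
    and q: "0 < norm q" "norm q < 1"
    and nz: "a \<noteq> 0" "k \<noteq> 0" "t \<noteq> 0" "b \<noteq> 0" "c \<noteq> 0"
    and rel: "k * b * c = q * a * t"
    and generic_q: "\<forall>j::nat. etheta (q ^ (Suc j)) p \<noteq> 0"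
    and generic: "\<forall>x \<in> {a, t, a * q / b, a * q / c, t * q / b, t * q / c,
                          k * b / t, k * c / t}.
                    \<forall>j::nat. etheta (x * q ^ j) p \<noteq> 0"
    and mN: "m \<le> N"
  shows "(\<Sum>n = m..N. Mmat p q N n a k * Dmat p q n a b c * Mmat p q n m t a)
       = Dmat p q N k (q * t / c) (q * t / b) * Mmat p q N m t k * Dmat p q m t b c"
proof (rule mdm_sum_eq)
  show "q \<noteq> 0" using q by auto
  show "N = m + (N - m)" using mN by simp
  show "etheta (q * q ^ j) p \<noteq> 0" for j
    using generic_q by simp
  show "etheta (a * q ^ j) p \<noteq> 0" "etheta (t * q ^ j) p \<noteq> 0"
    "etheta (a * q / b * q ^ j) p \<noteq> 0" "etheta (a * q / c * q ^ j) p \<noteq> 0"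
    "etheta (t * q / b * q ^ j) p \<noteq> 0" "etheta (t * q / c * q ^ j) p \<noteq> 0" for j
    using generic by simp_all
qed (use p nz rel in auto)

end
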